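(* Consider a nonempty configuration with largest nonempty level $\lambda$, and let $G,G'$ be integers with $A(G)<2^b$ and $A(G')<2^b$. Then every level $\ell$ with $A_\ell(G)\ne A_\ell(G')$ lies in the integer interval $[\theta(H,z),\lambda]$, where $H=\max\{G,G'\}$ and $\theta(H,z)=-b-H-\lfloor\log_2z\rfloor$, and this interval contains at most $2b$ integers. In particular, at most $2b$ levels satisfy $A_\ell(G)\neq A_\ell(G')$.
   Context: Fix an integer $b\ge 2$. There is a set $\mathcal L$ of $N$ levels, which are consecutive integers. Each level $\ell$ holds a finite (possibly empty) multiset of normalized significands, each an integer in $[2^{b-1},2^b)$. Let $z$ be the total number of stored significands over all levels; assume $z<2^b$. For each level, $SS_\ell$ is the sum of its significands (so $SS_\ell=0$ iff the level is empty); set $SS_\ell=0$ for integers $\ell\notin\mathcal L$. The level weight is $W_\ell=SS_\ell2^\ell$. For an integer global shift $G$, $A_\ell(G)=\lfloor W_\ell2^G\rfloor+1$ if $SS_\ell>0$ and $A_\ell(G)=0$ if $SS_\ell=0$; $A(G)=\sum_\ell A_\ell(G)$. The configuration is nonempty if $z\ge1$. *)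

theory Defs
  imports Complex_Main "HOL-Library.Multiset"
begin

text \<open>A configuration: a set L of levels (consecutive integers) and a function M
  assigning to each level a multiset of significands. Only levels in L count.\<close>

definition SS :: "int set \<Rightarrow> (int \<Rightarrow> nat multiset) \<Rightarrow> int \<Rightarrow> nat" where
  "SS L M l = (if l \<in> L then sum_mset (M l) else 0)"

definition zcount :: "int set \<Rightarrow> (int \<Rightarrow> nat multiset) \<Rightarrow> nat" where
  "zcount L M = (\<Sum>l\<in>L. size (M l))"

definition W :: "int set \<Rightarrow> (int \<Rightarrow> nat multiset) \<Rightarrow> int \<Rightarrow> real" where
  "W L M l = real (SS L M l) * 2 powr real_of_int l"

definition Alev :: "int set \<Rightarrow> (int \<Rightarrow> nat multiset) \<Rightarrow> int \<Rightarrow> int \<Rightarrow> int" where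
  "Alev L M G l = (if SS L M l > 0 then \<lfloor>W L M l * 2 powr real_of_int G\<rfloor> + 1 else 0)"

definition Atot :: "int set \<Rightarrow> (int \<Rightarrow> nat multiset) \<Rightarrow> int \<Rightarrow> int" where
  "Atot L M G = (\<Sum>l\<in>L. Alev L M G l)"

definition theta :: "nat \<Rightarrow> int \<Rightarrow> nat \<Rightarrow> int" where
  "theta b H z = - int b - H - \<lfloor>log 2 (real z)\<rfloor>"

end

theory Submission
  imports Defs
begin

text \<open>A level l below \<theta>(H, z) holds at most z significands, each below 2^b, so its scaled
  weight W_l 2^H is at most z 2^(b + l + H) \<le> z 2^(-\<lfloor>log_2 z\<rfloor> - 1) < 1. For every shift G \<le> H it
  therefore contributes exactly A_l(G) = 1, and the shifts G, G' can only disagree above \<theta>.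
  At the top level \<lambda>, SS_\<lambda> \<ge> 2^(b-1) and SS_\<lambda> 2^(\<lambda>+H) < A(H) < 2^b force \<lambda> + H \<le> 0;
  together with \<lfloor>log_2 z\<rfloor> \<le> b - 1 this leaves at most 2b integers in [\<theta>, \<lambda>].\<close>

lemma SS_pos_imp_nonempty_level: "SS L M l > 0 \<Longrightarrow> l \<in> L \<and> M l \<noteq> {#}"
  by (auto simp: SS_def split: if_splits)

lemma SS_le_zcount_mult:
  assumes "finite L" and "\<And>s. s \<in># M l \<Longrightarrow> s \<le> c"
  shows "SS L M l \<le> zcount L M * c"
proof (cases "l \<in> L")
  case True
  have "sum_mset (M l) \<le> size (M l) * c"
    using sum_mset_mono[of "M l" id "\<lambda>_. c"] assms(2) by simp
  also have "\<dots> \<le> zcount L M * c"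
    using member_le_sum[OF True _ assms(1), of "\<lambda>l. size (M l)"]
    by (simp add: zcount_def)
  finally show ?thesis using True by (simp add: SS_def)
qed (simp add: SS_def)

lemma member_le_SS: "l \<in> L \<Longrightarrow> s \<in># M l \<Longrightarrow> s \<le> SS L M l"
  by (simp add: SS_def sum_mset.remove)

lemma W_mult_powr:
  "W L M l * 2 powr real_of_int G = real (SS L M l) * 2 powr real_of_int (l + G)"
  by (simp add: W_def powr_add)

lemma Alev_nonneg: "Alev L M G l \<ge> 0"
  by (simp add: Alev_def W_def)

lemma Alev_gt_scaled_weight:
  "SS L M l > 0 \<Longrightarrow> W L M l * 2 powr real_of_int G < real_of_int (Alev L M G l)"
  by (simp add: Alev_def)

lemma Alev_eq_one:
  assumes "SS L M l > 0" and "W L M l * 2 powr real_of_int G < 1"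
  shows "Alev L M G l = 1"
  using assms by (simp add: Alev_def W_def floor_eq_iff)

lemma Alev_le_Atot: "finite L \<Longrightarrow> l \<in> L \<Longrightarrow> Alev L M G l \<le> Atot L M G"
  unfolding Atot_def by (rule member_le_sum) (simp_all add: Alev_nonneg)

lemma less_two_powr_floor_log2: "x > 0 \<Longrightarrow> x < 2 powr (\<lfloor>log 2 x\<rfloor> + 1)"
  using floor_log_eq_powr_iff[of x 2 "\<lfloor>log 2 x\<rfloor>"] by simp

lemma Alev_eq_one_below_theta:
  assumes "finite L"
    and sig: "\<And>s. s \<in># M l \<Longrightarrow> s < 2 ^ b"
    and "zcount L M \<ge> 1"
    and "G \<le> H"
    and "SS L M l > 0"
    and "l < theta b H (zcount L M)"
  shows "Alev L M G l = 1"
proof -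
  define z where "z = zcount L M"
  define k where "k = \<lfloor>log 2 (real z)\<rfloor>"
  have "SS L M l \<le> z * 2 ^ b"
    using SS_le_zcount_mult[OF assms(1)] sig by (simp add: z_def less_imp_le)
  hence SS_le: "real (SS L M l) \<le> real z * 2 powr real b"
    by (simp add: powr_realpow) (metis of_nat_le_iff of_nat_mult of_nat_numeral of_nat_power)
  have z_lt: "real z < 2 powr (k + 1)"
    using less_two_powr_floor_log2[of "real z"] assms(3) by (simp add: z_def k_def)
  have "l + G \<le> - int b - k - 1"
    using assms(4,6) by (simp add: theta_def z_def k_def)
  hence "W L M l * 2 powr real_of_int G \<le> real z * 2 powr real b * 2 powr (- int b - k - 1)"
    unfolding W_mult_powr by (intro mult_mono SS_le) simp_all
  also have "\<dots> = real z / 2 powr (k + 1)"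
  proof -
    have "2 powr real b * 2 powr real_of_int (- int b - k - 1) = (2::real) powr - real_of_int (k + 1)"
      by (simp flip: powr_add)
    thus ?thesis
      using powr_minus[of 2 "real_of_int (k + 1)"] by (simp add: divide_inverse mult.assoc)
  qed
  also have "\<dots> < 1"
    using z_lt by simp
  finally show ?thesis using Alev_eq_one assms(5) by blast
qed

lemma Alev_differ_imp_between:
  assumes "finite L"
    and sig: "\<And>l s. l \<in> L \<Longrightarrow> s \<in># M l \<Longrightarrow> s < 2 ^ b"
    and "zcount L M \<ge> 1"
    and differ: "Alev L M G l \<noteq> Alev L M G' l"
  shows "theta b (max G G') (zcount L M) \<le> l \<and> l \<le> Max {l \<in> L. M l \<noteq> {#}}"
proof -
  have pos: "SS L M l > 0"
    using differ by (cases "SS L M l > 0") (simp_all add: Alev_def)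
  hence "l \<in> L" "M l \<noteq> {#}"
    using SS_pos_imp_nonempty_level by simp_all
  hence "l \<le> Max {l \<in> L. M l \<noteq> {#}}"
    using assms(1) by (intro Max_ge) simp_all
  moreover have "\<not> l < theta b (max G G') (zcount L M)"
  proof
    assume "l < theta b (max G G') (zcount L M)"
    hence "Alev L M G l = 1" "Alev L M G' l = 1"
      using Alev_eq_one_below_theta[OF assms(1) sig[OF \<open>l \<in> L\<close>] assms(3) _ pos, where H = "max G G'"]
      by simp_all
    with differ show False by simp
  qed
  ultimately show ?thesis by simp
qed

lemma top_level_nonempty:
  assumes "finite L" and "zcount L M \<ge> 1"
  shows "Max {l \<in> L. M l \<noteq> {#}} \<in> L \<and> M (Max {l \<in> L. M l \<noteq> {#}}) \<noteq> {#}"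
proof -
  have "{l \<in> L. M l \<noteq> {#}} \<noteq> {}"
  proof
    assume "{l \<in> L. M l \<noteq> {#}} = {}"
    hence "zcount L M = 0" by (simp add: zcount_def)
    with assms(2) show False by simp
  qed
  hence "Max {l \<in> L. M l \<noteq> {#}} \<in> {l \<in> L. M l \<noteq> {#}}"
    using assms(1) by (intro Max_in) simp_all
  thus ?thesis by simp
qed

lemma top_level_plus_shift_nonpos:
  assumes "finite L" and "lam \<in> L"
    and SS_ge: "2 ^ (b - 1) \<le> SS L M lam"
    and "Atot L M H < 2 ^ b"
  shows "lam + H \<le> 0"
proof -
  have SS_pos: "SS L M lam > 0"
    by (rule less_le_trans[OF _ SS_ge]) simp
  have "real (SS L M lam) * 2 powr real_of_int (lam + H) < real_of_int (Alev L M H lam)"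
    using Alev_gt_scaled_weight[OF SS_pos, of H] unfolding W_mult_powr .
  also have "\<dots> \<le> real_of_int (Atot L M H)"
    using Alev_le_Atot[OF assms(1,2)] by simp
  also have "\<dots> < 2 ^ b"
    using assms(4) by (simp flip: of_int_less_iff)
  also have "(2::real) ^ b \<le> 2 ^ (b - 1) * 2"
    by (cases b) simp_all
  also have "\<dots> \<le> real (SS L M lam) * 2"
    using SS_ge by (simp flip: of_nat_le_iff)
  finally have "2 powr real_of_int (lam + H) < 2 powr 1"
    using SS_pos by simp
  hence "real_of_int (lam + H) < 1"
    by (rule powr_less_cancel) simp
  thus ?thesis
    by simp
qed

lemma card_theta_interval_le:
  assumes "lam + H \<le> 0" and "0 < z" and "z < 2 ^ b"
  shows "card {theta b H z .. lam} \<le> 2 * b"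
proof -
  have "log 2 (real z) < b"
    using log2_of_power_less assms(2,3) by blast
  hence "\<lfloor>log 2 (real z)\<rfloor> \<le> int b - 1"
    by linarith
  thus ?thesis
    using assms(1) by (simp add: theta_def)
qed

theorem mainTheorem12:
  fixes b :: nat and L :: "int set" and M :: "int \<Rightarrow> nat multiset"
    and lo hi G G' :: int
  assumes b2: "b \<ge> 2"
    and levels: "L = {lo..hi}"
    and sig: "\<And>l s. l \<in> L \<Longrightarrow> s \<in># M l \<Longrightarrow> 2 ^ (b - 1) \<le> s \<and> s < 2 ^ b"
    and zsmall: "zcount L M < 2 ^ b"
    and nonempty: "zcount L M \<ge> 1"
    and AG: "Atot L M G < 2 ^ b"
    and AG': "Atot L M G' < 2 ^ b"
  shows "(\<forall>l. Alev L M G l \<noteq> Alev L M G' l \<longrightarrow>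
            theta b (max G G') (zcount L M) \<le> l
            \<and> l \<le> Max {l \<in> L. M l \<noteq> {#}})
         \<and> card {theta b (max G G') (zcount L M) .. Max {l \<in> L. M l \<noteq> {#}}} \<le> 2 * b
         \<and> card {l. Alev L M G l \<noteq> Alev L M G' l} \<le> 2 * b"
proof -
  define H where "H = max G G'"
  define lam where "lam = Max {l \<in> L. M l \<noteq> {#}}"
  define th where "th = theta b H (zcount L M)"
  have fin: "finite L" using levels by simp
  have lam_in: "lam \<in> L" and "M lam \<noteq> {#}"
    using top_level_nonempty[OF fin nonempty] by (simp_all add: lam_def)
  then obtain s where s: "s \<in># M lam" by blast
  have "2 ^ (b - 1) \<le> SS L M lam"
    using sig[OF lam_in s] member_le_SS[where M = M, OF lam_in s] by linarith
  moreover have "Atot L M H < 2 ^ b"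
    using AG AG' by (simp add: H_def max_def)
  ultimately have "lam + H \<le> 0"
    using top_level_plus_shift_nonpos[OF fin lam_in] by blast
  hence card_le: "card {th..lam} \<le> 2 * b"
    using card_theta_interval_le nonempty zsmall by (simp add: th_def)
  have between: "\<forall>l. Alev L M G l \<noteq> Alev L M G' l \<longrightarrow> th \<le> l \<and> l \<le> lam"
    using Alev_differ_imp_between[OF fin _ nonempty] sig unfolding H_def th_def lam_def by blast
  hence "card {l. Alev L M G l \<noteq> Alev L M G' l} \<le> card {th..lam}"
    by (intro card_mono) auto
  thus ?thesis
    using between card_le by (simp add: H_def lam_def th_def)
qed

end
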